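(* Let $(K,S^0)$ be a divided simplicial complex with associated layered complex $(K,C,S)$, and let $s,p$ be simplices of $K$ such that (i) $p$ is an intermediate simplex of $(K,C,S)$, (ii) $p$ is principal in $K$, (iii) $s$ is a face of $p$ which is free in $K$, and (iv) every simplex $t$ of $S$ which is a proper face of $p$ is a proper face of $s$. Let $K_1=K-\{s,p\}$. Then $K_1$ has the same vertex set as $K$, so that $(K_1,S^0)$ is a divided simplicial complex, and the layered complex $(K_1,C,S)$ is the layered complex associated to the divided complex $(K_1,S^0)$.
   Context: A simplicial complex $K$ is a set of finite nonempty sets (simplices) closed under passing to nonempty subsets (faces); $K^0$ is its vertex set. A simplex is principal in $K$ if it is not a proper face of any simplex of $K$; $s$ is free in $K$ if it is a proper face of a principal simplex $p$ and of no other simplex of $K$. A layered simplicial complex is a triple $(K,C,S)$ with $C,S$ disjoint subcomplexes of $K$; its intermediate simplices are the simplices lying in neither $C$ nor $S$. A divided simplicial complex is a pair $(K,S^0)$ with $S^0\subseteq K^0$; its associated layered complex $(K,C,S)$ has $S$ = simplices all of whose vertices lie in $S^0$ and $C$ = simplices all of whose vertices lie in $K^0-S^0$. *)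

theory Defs
  imports Main
begin

definition simplicial_complex :: "'a set set \<Rightarrow> bool" where
  "simplicial_complex K \<longleftrightarrow>
     (\<forall>s\<in>K. finite s \<and> s \<noteq> {}) \<and>
     (\<forall>s\<in>K. \<forall>t. t \<subseteq> s \<and> t \<noteq> {} \<longrightarrow> t \<in> K)"

definition vertices :: "'a set set \<Rightarrow> 'a set" where
  "vertices K = \<Union>K"

definition subcomplex :: "'a set set \<Rightarrow> 'a set set \<Rightarrow> bool" where
  "subcomplex L K \<longleftrightarrow> L \<subseteq> K \<and> simplicial_complex L"

definition principal :: "'a set set \<Rightarrow> 'a set \<Rightarrow> bool" where
  "principal K p \<longleftrightarrow> p \<in> K \<and> \<not> (\<exists>t\<in>K. p \<subset> t)"

definition free :: "'a set set \<Rightarrow> 'a set \<Rightarrow> bool" where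
  "free K s \<longleftrightarrow> s \<in> K \<and>
     (\<exists>p. principal K p \<and> s \<subset> p \<and> (\<forall>t\<in>K. s \<subset> t \<longrightarrow> t = p))"

definition layered_complex :: "'a set set \<Rightarrow> 'a set set \<Rightarrow> 'a set set \<Rightarrow> bool" where
  "layered_complex K C S \<longleftrightarrow> simplicial_complex K \<and> subcomplex C K \<and> subcomplex S K \<and> C \<inter> S = {}"

definition intermediate :: "'a set set \<Rightarrow> 'a set set \<Rightarrow> 'a set set \<Rightarrow> 'a set \<Rightarrow> bool" where
  "intermediate K C S s \<longleftrightarrow> s \<in> K \<and> s \<notin> C \<and> s \<notin> S"

definition divided_complex :: "'a set set \<Rightarrow> 'a set \<Rightarrow> bool" where
  "divided_complex K S0 \<longleftrightarrow> simplicial_complex K \<and> S0 \<subseteq> vertices K"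

definition assoc_S :: "'a set set \<Rightarrow> 'a set \<Rightarrow> 'a set set" where
  "assoc_S K S0 = {s\<in>K. s \<subseteq> S0}"

definition assoc_C :: "'a set set \<Rightarrow> 'a set \<Rightarrow> 'a set set" where
  "assoc_C K S0 = {s\<in>K. s \<subseteq> vertices K - S0}"

end

theory Submission
  imports Defs
begin

text \<open>Removing the free pair \<open>{s, p}\<close> is an elementary collapse, so \<open>K\<^sub>1\<close> is again a
  complex. The key point is that \<open>s\<close> is intermediate as well: \<open>p\<close> has a vertex \<open>u \<in> S\<^sup>0\<close>, and
  condition (iv) applied to the proper face \<open>{u}\<close> of \<open>p\<close> forces \<open>{u} \<subset> s\<close>. Hence neither removed
  simplex lies in \<open>C\<close> or \<open>S\<close>, and neither is a vertex, so vertex set, \<open>C\<close> and \<open>S\<close> are unchanged.\<close>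

lemma simplicial_complex_face:
  "simplicial_complex K \<Longrightarrow> t \<in> K \<Longrightarrow> w \<subseteq> t \<Longrightarrow> w \<noteq> {} \<Longrightarrow> w \<in> K"
  unfolding simplicial_complex_def by blast

lemma simplicial_complex_nonempty:
  "simplicial_complex K \<Longrightarrow> t \<in> K \<Longrightarrow> t \<noteq> {}"
  unfolding simplicial_complex_def by blast

lemma simplicial_complex_restrict:
  "simplicial_complex K \<Longrightarrow> simplicial_complex {t \<in> K. t \<subseteq> A}"
  unfolding simplicial_complex_def by blast

lemma layered_complex_assoc:
  assumes "divided_complex K S0"
  shows "layered_complex K (assoc_C K S0) (assoc_S K S0)"
proof -
  have K: "simplicial_complex K"
    using assms by (simp add: divided_complex_def)
  then have "assoc_C K S0 \<inter> assoc_S K S0 = {}"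
    by (auto simp: assoc_C_def assoc_S_def dest: simplicial_complex_nonempty)
  with K show ?thesis
    by (auto simp: layered_complex_def subcomplex_def assoc_C_def assoc_S_def
        intro: simplicial_complex_restrict)
qed

lemma intermediate_assoc_iff:
  assumes "t \<in> K"
  shows "intermediate K (assoc_C K S0) (assoc_S K S0) t \<longleftrightarrow> t \<inter> S0 \<noteq> {} \<and> \<not> t \<subseteq> S0"
  using assms by (auto simp: intermediate_def assoc_C_def assoc_S_def vertices_def)

lemma assoc_S_Diff:
  "T \<inter> assoc_S K S0 = {} \<Longrightarrow> assoc_S (K - T) S0 = assoc_S K S0"
  unfolding assoc_S_def by blast

lemma assoc_C_Diff:
  "vertices (K - T) = vertices K \<Longrightarrow> T \<inter> assoc_C K S0 = {} \<Longrightarrow>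
    assoc_C (K - T) S0 = assoc_C K S0"
  unfolding assoc_C_def by auto

lemma vertices_Diff_nonsingletons:
  assumes "simplicial_complex K" and "\<And>v. {v} \<notin> T"
  shows "vertices (K - T) = vertices K"
proof
  show "vertices K \<subseteq> vertices (K - T)"
  proof
    fix v assume "v \<in> vertices K"
    then obtain t where "t \<in> K" "v \<in> t"
      by (auto simp: vertices_def)
    then have "{v} \<in> K - T"
      using assms simplicial_complex_face[of K t "{v}"] by auto
    then show "v \<in> vertices (K - T)"
      by (auto simp: vertices_def)
  qed
qed (auto simp: vertices_def)

lemma free_not_principal: "free K s \<Longrightarrow> \<not> principal K s"
  unfolding free_def principal_def by blast

lemma free_coface_unique:
  "free K s \<Longrightarrow> s \<subset> p \<Longrightarrow> p \<in> K \<Longrightarrow> t \<in> K \<Longrightarrow> s \<subset> t \<Longrightarrow> t = p"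
  unfolding free_def principal_def by metis

lemma free_coface_principal:
  "free K s \<Longrightarrow> s \<subset> p \<Longrightarrow> p \<in> K \<Longrightarrow> principal K p"
  unfolding free_def principal_def by metis

lemma simplicial_complex_collapse:
  assumes K: "simplicial_complex K" and "free K s" and "s \<subset> p" and "p \<in> K"
  shows "simplicial_complex (K - {s, p})"
  unfolding simplicial_complex_def
proof (intro conjI ballI allI impI)
  fix t assume "t \<in> K - {s, p}"
  then show "finite t" "t \<noteq> {}"
    using K unfolding simplicial_complex_def by auto
next
  fix t w assume t: "t \<in> K - {s, p}" and w: "w \<subseteq> t \<and> w \<noteq> {}"
  have "w \<noteq> s"
    using t w free_coface_unique[OF assms(2-4)] by blast
  moreover have "w \<noteq> p"
    using t w free_coface_principal[OF assms(2-4)] by (auto simp: principal_def)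
  ultimately show "w \<in> K - {s, p}"
    using t w simplicial_complex_face[OF K] by blast
qed

lemma singleton_psubset_face_of_S0_vertex:
  assumes K: "simplicial_complex K" and "p \<in> K" and "u \<in> p" and "u \<in> S0"
    and s: "s \<in> K" "s \<subset> p"
    and sface: "\<forall>t\<in>assoc_S K S0. t \<subset> p \<longrightarrow> t \<subset> s"
  shows "{u} \<subset> s"
proof -
  have "{u} \<in> assoc_S K S0"
    using assms simplicial_complex_face[of K p "{u}"] by (auto simp: assoc_S_def)
  moreover have "{u} \<subset> p"
    using s \<open>u \<in> p\<close> simplicial_complex_nonempty[OF K] by blast
  ultimately show ?thesis
    using sface by blast
qed

theorem lemma4p9:
  fixes K :: "'a set set" and S0 :: "'a set" and s p :: "'a set"
  assumes div: "divided_complex K S0"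
    and C_def: "C = assoc_C K S0" and S_def: "S = assoc_S K S0"
    and sK: "s \<in> K" and pK: "p \<in> K"
    and inter: "intermediate K C S p"
    and princ: "principal K p"
    and face: "s \<subseteq> p"
    and fr: "free K s"
    and sface: "\<forall>t\<in>S. t \<subset> p \<longrightarrow> t \<subset> s"
    and K1_def: "K1 = K - {s, p}"
  shows "vertices K1 = vertices K \<and> divided_complex K1 S0
         \<and> layered_complex K1 C S
         \<and> assoc_C K1 S0 = C \<and> assoc_S K1 S0 = S"
proof -
  have K: "simplicial_complex K" and S0: "S0 \<subseteq> vertices K"
    using div by (auto simp: divided_complex_def)
  have sp: "s \<subset> p"
    using face princ free_not_principal[OF fr] by blast
  obtain u where "u \<in> p" "u \<in> S0"
    using inter pK by (auto simp: C_def S_def intermediate_assoc_iff)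
  then have us: "{u} \<subset> s"
    using singleton_psubset_face_of_S0_vertex[OF K pK _ _ sK sp] sface by (simp add: S_def)
  have "s \<notin> S"
    using sface sp by blast
  then have "\<not> s \<subseteq> S0"
    using sK by (simp add: S_def assoc_S_def)
  moreover have "s \<inter> S0 \<noteq> {}"
    using us \<open>u \<in> S0\<close> by blast
  ultimately have s_inter: "intermediate K C S s"
    using sK by (simp add: C_def S_def intermediate_assoc_iff)
  have V: "vertices K1 = vertices K"
    unfolding K1_def using us sp by (intro vertices_Diff_nonsingletons[OF K]) blast
  have div1: "divided_complex K1 S0"
    using simplicial_complex_collapse[OF K fr sp pK] S0 V by (simp add: divided_complex_def K1_def)
  have "assoc_C K1 S0 = C" "assoc_S K1 S0 = S"
    using s_inter inter V unfolding K1_def C_def S_def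
    by (auto simp: intermediate_def intro!: assoc_C_Diff assoc_S_Diff)
  with V div1 layered_complex_assoc[OF div1] show ?thesis
    by simp
qed

end
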